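(* Consider a neutral evolutionary model on $N$ sites given by a replacement rule $p$ satisfying the fixation assumption described in the context. For any set $S\subseteq\{1,\ldots,N\}$ of sites, $\rho_S=\sum_{i\in S}\rho_i$. In particular, $\sum_{i=1}^N\rho_i=1$.
   Context: There are $N$ sites $1,\ldots,N$, each always occupied by one individual of type M (mutant) or R (resident); a state is $\mathbf{s}\in\{\mathrm{M},\mathrm{R}\}^N$. A replacement event is a pair $(R,\alpha)$ with $R\subseteq\{1,\ldots,N\}$ and $\alpha:R\to\{1,\ldots,N\}$. A replacement rule is a probability distribution $p(R,\alpha)$ on replacement events, independent of the state. The evolutionary Markov chain: at each time-step an event $(R,\alpha)$ is drawn with probability $p(R,\alpha)$ and the new state is $s_i'=s_i$ if $i\notin R$, $s_i'=s_{\alpha(i)}$ if $i\in R$. Fixation assumption: there exist a site $i$ and a finite sequence of replacement events, each of positive probability, such that if these events occur consecutively (from any initial state) every site ends up carrying the type initially at site $i$. For $S\subseteq\{1,\ldots,N\}$, $\rho_S=\lim_{t\to\infty}\Pr[\mathbf{s}(t)=(\mathrm{M},\ldots,\mathrm{M})]$ for the chain started from the state with M at the sites in $S$ and R at all other sites; $\rho_i=\rho_{\{i\}}$. *)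

theory Defs
  imports "HOL-Probability.Probability"
begin

text \<open>Sites are the elements of a finite type 'site (N = CARD('site)).
  A state assigns to each site True (= mutant M) or False (= resident R).
  A replacement event is a pair (R, alpha); only the values of alpha on R matter.
  A replacement rule is a probability mass function on replacement events.\<close>

type_synonym 'site state = "'site \<Rightarrow> bool"
type_synonym 'site event = "'site set \<times> ('site \<Rightarrow> 'site)"

definition apply_event :: "'site event \<Rightarrow> 'site state \<Rightarrow> 'site state" where
  "apply_event e s = (\<lambda>i. if i \<in> fst e then s (snd e i) else s i)"

definition apply_events :: "'site event list \<Rightarrow> 'site state \<Rightarrow> 'site state" where
  "apply_events es s = fold apply_event es s"

definition fixation_assumption :: "'site event pmf \<Rightarrow> bool" where
  "fixation_assumption p \<longleftrightarrow>
     (\<exists>i es. set es \<subseteq> set_pmf p \<and> (\<forall>s j. apply_events es s j = s i))"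

primrec state_dist :: "'site event pmf \<Rightarrow> 'site state \<Rightarrow> nat \<Rightarrow> 'site state pmf" where
  "state_dist p s0 0 = return_pmf s0"
| "state_dist p s0 (Suc t) = bind_pmf (state_dist p s0 t) (\<lambda>s. map_pmf (\<lambda>e. apply_event e s) p)"

definition init_state :: "'site set \<Rightarrow> 'site state" where
  "init_state S = (\<lambda>i. i \<in> S)"

definition fix_prob_seq :: "'site event pmf \<Rightarrow> 'site set \<Rightarrow> nat \<Rightarrow> real" where
  "fix_prob_seq p S t = pmf (state_dist p (init_state S) t) (\<lambda>_. True)"

definition rho :: "'site event pmf \<Rightarrow> 'site set \<Rightarrow> real" where
  "rho p S = lim (fix_prob_seq p S)"

end

theory Submission
  imports Defs
begin

text \<open>Run the chain backwards: the state at time t is the initial state composed with a random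
  ancestry map g, sending each site to the site at time 0 from which its present occupant descends.
  The fixation probability of S at time t is therefore the probability that all ancestors lie in S,
  and it differs from the sum over i \<in> S of the probabilities that all ancestors equal i only on
  the event that g is non-constant.  Ancestry maps of consecutive time blocks compose independently,
  so the probability that g is non-constant is submultiplicative in t; the fixation assumption makes
  it less than 1 at some time, hence it tends to 0.\<close>

lemma filterlim_div_sequentially:
  assumes "0 < (L::nat)"
  shows "filterlim (\<lambda>t. t div L) at_top sequentially"
  unfolding filterlim_at_top
proof
  fix k
  show "\<forall>\<^sub>F t in sequentially. k \<le> t div L"
    using assms by (intro eventually_sequentiallyI[of "k * L"]) (metis div_le_mono div_mult_self_is_m)
qed

lemma submultiplicative_tendsto_zero:
  fixes B :: "nat \<Rightarrow> real"
  assumes nonneg: "\<And>t. 0 \<le> B t" and le_1: "\<And>t. B t \<le> 1"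
    and submult: "\<And>m n. B (m + n) \<le> B m * B n"
    and "0 < L" and "B L < 1"
  shows "B \<longlonglongrightarrow> 0"
proof (rule tendsto_sandwich[OF _ _ tendsto_const])
  have power_bound: "B (k * L) \<le> B L ^ k" for k
  proof (induction k)
    case 0
    then show ?case using le_1 by simp
  next
    case (Suc k)
    have "B (Suc k * L) \<le> B L * B (k * L)"
      using submult[of L "k * L"] by (simp add: add.commute)
    also have "\<dots> \<le> B L * B L ^ k"
      using Suc.IH nonneg by (simp add: mult_left_mono)
    finally show ?case by simp
  qed
  have "B t \<le> B L ^ (t div L)" for t
  proof -
    have "B t \<le> B (t div L * L) * B (t mod L)"
      using submult[of "t div L * L" "t mod L"] by simp
    also have "\<dots> \<le> B (t div L * L)"
      using le_1 nonneg[of "t div L * L"] by (simp add: mult_left_le)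
    finally show ?thesis using power_bound order_trans by blast
  qed
  then show "\<forall>\<^sub>F t in sequentially. B t \<le> B L ^ (t div L)" by simp
  show "\<forall>\<^sub>F t in sequentially. 0 \<le> B t" using nonneg by simp
  have "(\<lambda>k. B L ^ k) \<longlonglongrightarrow> 0"
    using assms nonneg by (intro LIMSEQ_power_zero) simp
  then show "(\<lambda>t. B L ^ (t div L)) \<longlonglongrightarrow> 0"
    using filterlim_div_sequentially[OF \<open>0 < L\<close>] by (rule filterlim_compose)
qed

lemma prob_range_subset_eq_sum:
  fixes M :: "('a \<Rightarrow> 'b::finite) pmf"
  shows "measure_pmf.prob M {g. range g \<subseteq> S}
    = (\<Sum>i\<in>S. measure_pmf.prob M {g. range g \<subseteq> {i}})
      + measure_pmf.prob M {g. range g \<subseteq> S \<and> \<not> g constant_on UNIV}"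
proof -
  have split: "{g. range g \<subseteq> S}
      = (\<Union>i\<in>S. {g. range g \<subseteq> {i}}) \<union> {g. range g \<subseteq> S \<and> \<not> g constant_on UNIV}"
    by (auto simp: constant_on_def)
  have "disjoint_family_on (\<lambda>i. {g. range g \<subseteq> {i}}) S"
    by (auto simp: disjoint_family_on_def) (metis UNIV_I image_subset_iff singletonD)
  then have "measure_pmf.prob M (\<Union>i\<in>S. {g. range g \<subseteq> {i}})
      = (\<Sum>i\<in>S. measure_pmf.prob M {g. range g \<subseteq> {i}})"
    by (intro measure_pmf.finite_measure_finite_Union) simp_all
  moreover have "(\<Union>i\<in>S. {g. range g \<subseteq> {i}}) \<inter> {g. range g \<subseteq> S \<and> \<not> g constant_on UNIV} = {}"
    by (auto simp: constant_on_def image_subset_iff)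
  ultimately show ?thesis
    unfolding split by (subst measure_pmf.finite_measure_Union) simp_all
qed

definition parent_map :: "'s event \<Rightarrow> 's \<Rightarrow> 's" where
  "parent_map e = (\<lambda>i. if i \<in> fst e then snd e i else i)"

text \<open>In the composition g \<circ> parent_map e the newest event e supplies the immediate parent and
  the older history g the rest of the lineage.\<close>

primrec ancestry :: "'s event pmf \<Rightarrow> nat \<Rightarrow> ('s \<Rightarrow> 's) pmf" where
  "ancestry p 0 = return_pmf id"
| "ancestry p (Suc t) = bind_pmf (ancestry p t) (\<lambda>g. map_pmf (\<lambda>e. g \<circ> parent_map e) p)"

lemma apply_event_eq_comp: "apply_event e s = s \<circ> parent_map e"
  by (simp add: apply_event_def parent_map_def fun_eq_iff)

lemma state_dist_eq_map_ancestry: "state_dist p s0 t = map_pmf (\<lambda>g. s0 \<circ> g) (ancestry p t)"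
  by (induction t) (simp_all add: map_bind_pmf bind_map_pmf map_pmf_comp apply_event_eq_comp comp_def)

lemma fix_prob_seq_eq_prob_ancestry:
  "fix_prob_seq p S t = measure_pmf.prob (ancestry p t) {g. range g \<subseteq> S}"
proof -
  have preimage: "(\<lambda>g. init_state S \<circ> g) -` {\<lambda>_. True} = {g. range g \<subseteq> S}"
    by (auto simp: init_state_def fun_eq_iff image_subset_iff)
  show ?thesis
    unfolding fix_prob_seq_def state_dist_eq_map_ancestry pmf_map preimage ..
qed

lemma ancestry_add:
  "ancestry p (m + n) = map_pmf (\<lambda>(g, h). g \<circ> h) (pair_pmf (ancestry p m) (ancestry p n))"
proof (induction n)
  case 0
  then show ?case
    by (simp add: pair_return_pmf2 map_pmf_comp)
next
  case (Suc n)
  have "ancestry p (m + Suc n) = bind_pmf (ancestry p (m + n)) (\<lambda>g. map_pmf (\<lambda>e. g \<circ> parent_map e) p)"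
    by simp
  also have "\<dots> = map_pmf (\<lambda>(g, h). g \<circ> h) (pair_pmf (ancestry p m) (ancestry p (Suc n)))"
    unfolding Suc.IH by (simp add: pair_pmf_def map_bind_pmf bind_map_pmf bind_assoc_pmf bind_return_pmf o_assoc)
      (simp add: map_pmf_def)
  finally show ?case .
qed

lemma apply_events_eq_comp:
  "apply_events es (s \<circ> g) = s \<circ> fold (\<lambda>e g. g \<circ> parent_map e) es g"
  unfolding apply_events_def
  by (induction es arbitrary: g) (simp_all add: apply_event_eq_comp comp_assoc)

lemma fold_parent_map_in_ancestry:
  assumes "set es \<subseteq> set_pmf p" "g \<in> set_pmf (ancestry p t)"
  shows "fold (\<lambda>e g. g \<circ> parent_map e) es g \<in> set_pmf (ancestry p (t + length es))"
  using assms
proof (induction es arbitrary: g t)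
  case Nil
  then show ?case by simp
next
  case (Cons e es)
  have step: "g \<circ> parent_map e \<in> set_pmf (ancestry p (Suc t))"
    using Cons.prems by auto
  have "fold (\<lambda>e g. g \<circ> parent_map e) es (g \<circ> parent_map e) \<in> set_pmf (ancestry p (Suc t + length es))"
    by (rule Cons.IH[OF _ step]) (use Cons.prems(1) in simp)
  then show ?case
    by (simp only: fold_simps length_Cons add_Suc_shift[symmetric])
qed

lemma fixation_assumption_constant_ancestry:
  assumes "fixation_assumption p"
  obtains L g where "g \<in> set_pmf (ancestry p L)" "g constant_on UNIV"
proof -
  obtain i es where es: "set es \<subseteq> set_pmf p" "\<And>s j. apply_events es s j = s i"
    using assms unfolding fixation_assumption_def by (elim exE conjE) blast
  define g where "g = fold (\<lambda>e g. g \<circ> parent_map e) es id"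
  have "apply_events es s = s \<circ> g" for s
    using apply_events_eq_comp[of es s id] by (simp add: g_def)
  then have "g j = i" for j
    using es(2)[of "\<lambda>x. x = i" j] by simp
  then have "g constant_on UNIV"
    by (auto simp: constant_on_def)
  moreover have "g \<in> set_pmf (ancestry p (0 + length es))"
    unfolding g_def using es(1) by (intro fold_parent_map_in_ancestry) simp_all
  ultimately show thesis
    by (rule that[rotated])
qed

lemma prob_nonconstant_ancestry_submult:
  fixes p :: "('s::finite) event pmf"
  defines "N \<equiv> {g. \<not> g constant_on UNIV}"
  shows "measure_pmf.prob (ancestry p (m + n)) N
    \<le> measure_pmf.prob (ancestry p m) N * measure_pmf.prob (ancestry p n) N"
proof -
  txt \<open>A composition is constant as soon as either factor is.\<close>
  have "(\<lambda>(g, h). g \<circ> h) -` N \<subseteq> N \<times> N"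
    by (auto simp: N_def constant_on_def) metis+
  then have "measure_pmf.prob (ancestry p (m + n)) N
      \<le> measure_pmf.prob (pair_pmf (ancestry p m) (ancestry p n)) (N \<times> N)"
    unfolding ancestry_add measure_map_pmf by (rule measure_pmf.finite_measure_mono) simp
  also have "\<dots> = measure_pmf.prob (ancestry p m) N * measure_pmf.prob (ancestry p n) N"
    by (simp add: measure_pmf_prob_product countable_finite)
  finally show ?thesis .
qed

lemma prob_nonconstant_ancestry_tendsto_zero:
  fixes p :: "('s::finite) event pmf"
  assumes "fixation_assumption p"
  shows "(\<lambda>t. measure_pmf.prob (ancestry p t) {g. \<not> g constant_on UNIV}) \<longlonglongrightarrow> 0"
proof -
  define B where "B = (\<lambda>t. measure_pmf.prob (ancestry p t) {g. \<not> g constant_on UNIV})"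
  obtain L g where g: "g \<in> set_pmf (ancestry p L)" "g constant_on UNIV"
    using fixation_assumption_constant_ancestry[OF assms] .
  have "0 < measure_pmf.prob (ancestry p L) {g}"
    using g(1) by (simp add: measure_pmf_single pmf_positive)
  also have "\<dots> \<le> measure_pmf.prob (ancestry p L) {g. g constant_on UNIV}"
    using g(2) by (intro measure_pmf.finite_measure_mono) auto
  also have "\<dots> = 1 - B L"
    using measure_pmf.prob_compl[of "{g. g constant_on UNIV}" "ancestry p L"]
    by (simp add: B_def Compl_eq_Diff_UNIV[symmetric] Collect_neg_eq)
  finally have "B L < 1" by simp
  have le_1: "B t \<le> 1" for t
    by (simp add: B_def)
  have submult: "B (m + n) \<le> B m * B n" for m n
    unfolding B_def by (rule prob_nonconstant_ancestry_submult)
  txt \<open>L may be 0 (a single site), so pass to the positive period Suc L.\<close>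
  have "B (Suc L) \<le> B L * B 1"
    using submult[of L 1] by simp
  also have "\<dots> \<le> B L"
    using le_1[of 1] by (simp add: B_def mult_left_le)
  finally have "B (Suc L) < 1"
    using \<open>B L < 1\<close> by simp
  then have "B \<longlonglongrightarrow> 0"
    by (intro submultiplicative_tendsto_zero[of B "Suc L"] le_1 submult) (simp_all add: B_def)
  then show ?thesis unfolding B_def .
qed

lemma incseq_fix_prob_seq:
  fixes p :: "('s::finite) event pmf"
  shows "incseq (fix_prob_seq p S)"
proof (rule incseq_SucI)
  fix t
  let ?R = "{g. range g \<subseteq> S}"
  have "?R \<times> UNIV \<subseteq> (\<lambda>(g, h). g \<circ> h) -` ?R"
    by auto
  then have "measure_pmf.prob (pair_pmf (ancestry p t) (ancestry p 1)) (?R \<times> UNIV)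
      \<le> measure_pmf.prob (ancestry p (t + 1)) ?R"
    unfolding ancestry_add measure_map_pmf by (rule measure_pmf.finite_measure_mono) simp
  then show "fix_prob_seq p S t \<le> fix_prob_seq p S (Suc t)"
    by (simp del: ancestry.simps add: fix_prob_seq_eq_prob_ancestry measure_pmf_prob_product countable_finite)
qed

lemma convergent_fix_prob_seq:
  fixes p :: "('s::finite) event pmf"
  shows "convergent (fix_prob_seq p S)"
proof -
  have "fix_prob_seq p S t \<le> 1" for t
    by (simp add: fix_prob_seq_eq_prob_ancestry)
  then obtain l where "fix_prob_seq p S \<longlonglongrightarrow> l"
    using incseq_convergent[OF incseq_fix_prob_seq] by blast
  then show ?thesis by (auto simp: convergent_def)
qed

lemma fix_prob_seq_minus_sum_singletons_tendsto_zero: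
  fixes p :: "('s::finite) event pmf"
  assumes "fixation_assumption p"
  shows "(\<lambda>t. fix_prob_seq p S t - (\<Sum>i\<in>S. fix_prob_seq p {i} t)) \<longlonglongrightarrow> 0"
proof (rule tendsto_sandwich[OF _ _ tendsto_const prob_nonconstant_ancestry_tendsto_zero[OF assms]])
  let ?D = "\<lambda>t. measure_pmf.prob (ancestry p t) {g. range g \<subseteq> S \<and> \<not> g constant_on UNIV}"
  have diff: "fix_prob_seq p S t - (\<Sum>i\<in>S. fix_prob_seq p {i} t) = ?D t" for t
    by (simp add: fix_prob_seq_eq_prob_ancestry prob_range_subset_eq_sum[of _ S])
  show "\<forall>\<^sub>F t in sequentially. 0 \<le> fix_prob_seq p S t - (\<Sum>i\<in>S. fix_prob_seq p {i} t)"
    by (simp add: diff)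
  have "?D t \<le> measure_pmf.prob (ancestry p t) {g. \<not> g constant_on UNIV}" for t
    by (rule measure_pmf.finite_measure_mono) auto
  then show "\<forall>\<^sub>F t in sequentially. fix_prob_seq p S t - (\<Sum>i\<in>S. fix_prob_seq p {i} t)
      \<le> measure_pmf.prob (ancestry p t) {g. \<not> g constant_on UNIV}"
    by (simp add: diff)
qed

theorem mainTheorem6:
  fixes p :: "('site::finite) event pmf"
  assumes "fixation_assumption p"
  shows "(\<forall>S. convergent (fix_prob_seq p S))
       \<and> (\<forall>S. rho p S = (\<Sum>i\<in>S. rho p {i}))
       \<and> (\<Sum>i\<in>UNIV. rho p {i}) = 1"
proof -
  have lim: "fix_prob_seq p S \<longlonglongrightarrow> rho p S" for S
    using convergent_fix_prob_seq unfolding rho_def by (rule convergent_LIMSEQ_iff[THEN iffD1])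
  have additive: "rho p S = (\<Sum>i\<in>S. rho p {i})" for S
  proof -
    have "(\<lambda>t. fix_prob_seq p S t - (\<Sum>i\<in>S. fix_prob_seq p {i} t))
        \<longlonglongrightarrow> rho p S - (\<Sum>i\<in>S. rho p {i})"
      by (intro tendsto_diff tendsto_sum lim)
    with fix_prob_seq_minus_sum_singletons_tendsto_zero[OF assms]
    have "rho p S - (\<Sum>i\<in>S. rho p {i}) = 0"
      by (rule LIMSEQ_unique[rotated])
    then show ?thesis by simp
  qed
  have "fix_prob_seq p UNIV = (\<lambda>t. 1)"
    by (simp add: fun_eq_iff fix_prob_seq_eq_prob_ancestry)
  then have "rho p UNIV = 1"
    unfolding rho_def by (simp add: limI)
  then show ?thesis
    using convergent_fix_prob_seq additive by metis
qed

end
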